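(* Let $m\ge 2$, $n\ge 3$, let $\mathcal{C}^3_{m,n}=(V_1,V_2,E)$, and let $e\in E$ be a hyperedge containing exactly one vertex of $V_1$ and two vertices of $V_2$. Then the Seidel spectrum of $\mathcal{C}^3_{m,n}-e$ consists of the eigenvalue $2n-1$ with multiplicity $m-2$, the eigenvalue $2m-1$ with multiplicity $n-3$, and the five roots $\rho_1,\dots,\rho_5$ of $\xi_1(\rho)=0$, where \begin{align*} \xi_1(\rho)={}&-\rho^5+(-5+7m+5n-4mn)\rho^4\\ &+(46+4m-18m^2+4n-22mn+2m^2n+4m^3n-8n^2-6mn^2+4m^2n^2+4mn^3)\rho^3\\ &+(286-234m-46m^2+36m^3-206n+62mn-10m^2n+52m^3n-16m^4n+8n^2-10mn^2\\ &\quad+64m^2n^2-24m^3n^2+4n^3+40mn^3-24m^2n^3-8mn^4)\rho^2\\ &+(83+76m-366m^2+248m^3-40m^4-228n-90mn+238m^2n+20m^3n-88m^4n+16m^5n\\ &\quad-40n^2+246mn^2+132m^2n^2-184m^3n^2+48m^4n^2+40n^3-28mn^3-160m^2n^3\\ &\quad+48m^3n^3-16mn^4+32m^2n^4)\rho\\ &+(-921+2387m-2322m^2+1012m^3-168m^4+873n-2250mn+1994m^2n-732m^3n\\ &\quad+72m^4n+16m^5n-408n^2+1274mn^2-680m^2n^2-160m^3n^2+160m^4n^2-32m^5n^2\\ &\quad+84n^3-368mn^3+40m^2n^3+160m^3n^3-32m^4n^3+24mn^4+32m^2n^4-32m^3n^4). \end{align*}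
   Context: For a hypergraph $\mathcal{H}$ and distinct vertices $i,j$, the co-degree $c_{ij}$ is the number of hyperedges containing both $i$ and $j$. The Seidel matrix $\mathcal{S}(\mathcal{H})$ has zero diagonal and $(i,j)$-entry $1-2c_{ij}$ for $i\neq j$; its eigenvalues (with multiplicity) form the Seidel spectrum of $\mathcal{H}$. The complete $3$-uniform bipartite hypergraph $\mathcal{C}^3_{m,n}=(V_1,V_2,E)$ has vertex set $V_1\sqcup V_2$, $|V_1|=m$, $|V_2|=n$, and $E$ = all $3$-subsets meeting both $V_1$ and $V_2$. For a hyperedge $e$, $\mathcal{H}-e$ denotes the hypergraph with the same vertex set and hyperedge set $E\setminus\{e\}$. *)

theory Defs
  imports "Jordan_Normal_Form.Char_Poly"
begin

text \<open>A hypergraph on the vertex set {0..<N} is given by its set of hyperedges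
  (each hyperedge a set of vertices).\<close>

definition codegree :: "nat set set \<Rightarrow> nat \<Rightarrow> nat \<Rightarrow> nat" where
  "codegree E i j = card {e \<in> E. i \<in> e \<and> j \<in> e}"

definition seidel_matrix :: "nat \<Rightarrow> nat set set \<Rightarrow> real mat" where
  "seidel_matrix N E = mat N N (\<lambda>(i, j). if i = j then 0 else 1 - 2 * real (codegree E i j))"

definition complete_bip3_edges :: "nat set \<Rightarrow> nat set \<Rightarrow> nat set set" where
  "complete_bip3_edges V1 V2 =
     {e. e \<subseteq> V1 \<union> V2 \<and> card e = 3 \<and> e \<inter> V1 \<noteq> {} \<and> e \<inter> V2 \<noteq> {}}"

definition xi1 :: "real \<Rightarrow> real \<Rightarrow> real poly" where
  "xi1 m n = [:
     -921+2387*m-2322*m^2+1012*m^3-168*m^4+873*n-2250*m*n+1994*m^2*n-732*m^3*n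
      +72*m^4*n+16*m^5*n-408*n^2+1274*m*n^2-680*m^2*n^2-160*m^3*n^2+160*m^4*n^2-32*m^5*n^2
      +84*n^3-368*m*n^3+40*m^2*n^3+160*m^3*n^3-32*m^4*n^3+24*m*n^4+32*m^2*n^4-32*m^3*n^4,
     83+76*m-366*m^2+248*m^3-40*m^4-228*n-90*m*n+238*m^2*n+20*m^3*n-88*m^4*n+16*m^5*n
      -40*n^2+246*m*n^2+132*m^2*n^2-184*m^3*n^2+48*m^4*n^2+40*n^3-28*m*n^3-160*m^2*n^3
      +48*m^3*n^3-16*m*n^4+32*m^2*n^4,
     286-234*m-46*m^2+36*m^3-206*n+62*m*n-10*m^2*n+52*m^3*n-16*m^4*n+8*n^2-10*m*n^2
      +64*m^2*n^2-24*m^3*n^2+4*n^3+40*m*n^3-24*m^2*n^3-8*m*n^4,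
     46+4*m-18*m^2+4*n-22*m*n+2*m^2*n+4*m^3*n-8*n^2-6*m*n^2+4*m^2*n^2+4*m*n^3,
     -5+7*m+5*n-4*m*n,
     -1 :]"

end

theory Submission
  imports Defs
begin

(*
  Let e = {a, b1, b2} with a in V1. The classes e \<inter> V2, e \<inter> V1, V1 - e, V2 - e partition
  the vertices so that the Seidel entry of two distinct vertices depends only on their classes.
  For a matrix S with zero diagonal and class-constant off-diagonal entries s, the matrix
  x I - S is a diagonal matrix plus a matrix of rank at most the number of classes, and
  Sylvester's identity det (I + X Y) = det (I + Y X) shows that every class C contributes the
  eigenvalue -s(C, C) with multiplicity |C| - 1, the remaining eigenvalues being those of the
  quotient matrix of the partition. This yields 2n - 1 with multiplicity m - 2 and 2m - 1 with
  multiplicity n - 3; the characteristic polynomial of the 4 x 4 quotient matrix, multiplied by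
  the factor x - (2m - 3) contributed by the class {b1, b2}, is - xi1.
*)

lemma mat_mult_mat:
  "mat nr n f * mat n nc g = mat nr nc (\<lambda>(i, j). \<Sum>l<n. f (i, l) * g (l, j))"
  by (rule eq_matI) (auto simp: scalar_prod_def atLeast0LessThan intro!: sum.cong)

definition diag_of_fun :: "nat \<Rightarrow> (nat \<Rightarrow> 'a::zero) \<Rightarrow> 'a mat" where
  "diag_of_fun n d = mat n n (\<lambda>(i, j). if i = j then d i else 0)"

lemma diag_of_fun_carrier [simp]: "diag_of_fun n d \<in> carrier_mat n n"
  by (simp add: diag_of_fun_def)

lemma diag_of_fun_mult_mat:
  "diag_of_fun n d * mat n nc f = mat n nc (\<lambda>(i, j). d i * f (i, j))"
  unfolding diag_of_fun_def mat_mult_mat by (rule eq_matI) (auto simp: if_distrib if_distribR cong: if_cong)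

lemma mat_mult_diag_of_fun:
  "mat nr n f * diag_of_fun n d = mat nr n (\<lambda>(i, j). f (i, j) * d j)"
  unfolding diag_of_fun_def mat_mult_mat by (rule eq_matI) (auto simp: if_distrib if_distribR cong: if_cong)

lemma det_diag_of_fun: "det (diag_of_fun n d) = (\<Prod>i<n. d i)"
proof -
  have "det (diag_of_fun n d) = prod_list (diag_mat (diag_of_fun n d))"
    by (rule det_upper_triangular) (auto simp: upper_triangular_def diag_of_fun_def)
  also have "\<dots> = prod_list (map d [0..<n])"
    by (auto simp: diag_mat_def diag_of_fun_def intro!: arg_cong[where f = prod_list])
  finally show ?thesis
    by (simp add: prod.list_conv_set_nth atLeast0LessThan)
qed

lemma det_one_plus_mult_commute:
  fixes X :: "'a::idom mat"
  assumes X: "X \<in> carrier_mat n k" and Y: "Y \<in> carrier_mat k n"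
  shows "det (1\<^sub>m n + X * Y) = det (1\<^sub>m k + Y * X)"
proof -
  define Z where "Z = four_block_mat (1\<^sub>m n) (-X) Y (1\<^sub>m k)"
  define L where "L = four_block_mat (1\<^sub>m n) X (0\<^sub>m k n) (1\<^sub>m k)"
  have Z: "Z \<in> carrier_mat (n + k) (n + k)" and L: "L \<in> carrier_mat (n + k) (n + k)"
    unfolding Z_def L_def using X Y by auto
  have det_L: "det L = 1"
    unfolding L_def by (subst det_four_block_mat_lower_left_zero[of _ n _ k]) (use X in auto)
  have "L * Z = four_block_mat (1\<^sub>m n * 1\<^sub>m n + X * Y) (1\<^sub>m n * (-X) + X * 1\<^sub>m k)
      (0\<^sub>m k n * 1\<^sub>m n + 1\<^sub>m k * Y) (0\<^sub>m k n * (-X) + 1\<^sub>m k * 1\<^sub>m k)"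
    unfolding L_def Z_def by (rule mult_four_block_mat) (use X Y in auto)
  also have "\<dots> = four_block_mat (1\<^sub>m n + X * Y) (0\<^sub>m n k) Y (1\<^sub>m k)"
    using X Y by (auto simp: uminus_l_inv_mat)
  finally have LZ: "L * Z = four_block_mat (1\<^sub>m n + X * Y) (0\<^sub>m n k) Y (1\<^sub>m k)" .
  have "Z * L = four_block_mat (1\<^sub>m n * 1\<^sub>m n + (-X) * 0\<^sub>m k n) (1\<^sub>m n * X + (-X) * 1\<^sub>m k)
      (Y * 1\<^sub>m n + 1\<^sub>m k * 0\<^sub>m k n) (Y * X + 1\<^sub>m k * 1\<^sub>m k)"
    unfolding L_def Z_def by (rule mult_four_block_mat) (use X Y in auto)
  also have "\<dots> = four_block_mat (1\<^sub>m n) (0\<^sub>m n k) Y (1\<^sub>m k + Y * X)"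
  proof -
    have "X + (-X) = 0\<^sub>m n k" using X by (intro eq_matI) auto
    then show ?thesis using X Y by (auto simp: comm_add_mat[of "Y * X" k k])
  qed
  finally have ZL: "Z * L = four_block_mat (1\<^sub>m n) (0\<^sub>m n k) Y (1\<^sub>m k + Y * X)" .
  have "det (1\<^sub>m n + X * Y) = det (L * Z)"
    unfolding LZ by (subst det_four_block_mat_upper_right_zero[of _ n]) (use X Y in auto)
  also have "\<dots> = det (Z * L)"
    using det_mult[OF L Z] det_mult[OF Z L] det_L by simp
  also have "\<dots> = det (1\<^sub>m k + Y * X)"
    unfolding ZL by (subst det_four_block_mat_upper_right_zero[of _ n]) (use X Y in auto)
  finally show ?thesis .
qed

definition class_size :: "nat \<Rightarrow> (nat \<Rightarrow> nat) \<Rightarrow> nat \<Rightarrow> nat" where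
  "class_size N cls c = card {i. i < N \<and> cls i = c}"

lemma prod_comp_eq_prod_class_size:
  assumes "\<And>i. i < N \<Longrightarrow> cls i < K"
  shows "(\<Prod>i<N. f (cls i)) = (\<Prod>c<K. f c ^ class_size N cls c)"
proof -
  have "(\<Prod>i<N. f (cls i)) = (\<Prod>c<K. \<Prod>i\<in>{i \<in> {..<N}. cls i = c}. f (cls i))"
    using assms by (intro prod.group[symmetric]) auto
  also have "\<dots> = (\<Prod>c<K. f c ^ class_size N cls c)"
    by (intro prod.cong refl) (simp add: class_size_def)
  finally show ?thesis .
qed

lemma class_indicator_mult_class_mat:
  assumes "\<And>i. i < N \<Longrightarrow> cls i < K"
  shows "mat N K (\<lambda>(i, c). if cls i = c then g c else 0) * mat K N (\<lambda>(r, j). A r (cls j)) =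
    mat N N (\<lambda>(i, j). g (cls i) * A (cls i) (cls j))"
  unfolding mat_mult_mat using assms
  by (intro eq_matI) (auto simp: if_distrib if_distribR cong: if_cong)

lemma class_mat_mult_class_indicator:
  fixes A :: "nat \<Rightarrow> nat \<Rightarrow> 'a::comm_semiring_1"
  shows "mat K N (\<lambda>(r, j). A r (cls j)) * mat N K (\<lambda>(i, c). if cls i = c then g c else 0) =
    mat K K (\<lambda>(r, t). A r t * of_nat (class_size N cls t) * g t)"
proof (rule eq_matI)
  fix r t assume "r < dim_row (mat K K (\<lambda>(r, t). A r t * of_nat (class_size N cls t) * g t))"
    "t < dim_col (mat K K (\<lambda>(r, t). A r t * of_nat (class_size N cls t) * g t))"
  then have rt: "r < K" "t < K" by auto
  have "(\<Sum>j<N. A r (cls j) * (if cls j = t then g t else 0)) = (\<Sum>j<N. if cls j = t then A r t * g t else 0)"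
    by (intro sum.cong) auto
  also have "\<dots> = (\<Sum>j\<in>{j \<in> {..<N}. cls j = t}. A r t * g t)"
    by (rule sum.inter_filter[symmetric]) simp
  also have "\<dots> = of_nat (class_size N cls t) * (A r t * g t)"
    by (simp add: class_size_def)
  finally show "(mat K N (\<lambda>(r, j). A r (cls j)) * mat N K (\<lambda>(i, c). if cls i = c then g c else 0)) $$ (r, t) =
      mat K K (\<lambda>(r, t). A r t * of_nat (class_size N cls t) * g t) $$ (r, t)"
    using rt unfolding mat_mult_mat by (simp add: mult_ac)
qed auto

lemma det_diag_plus_class_mat:
  fixes d :: "nat \<Rightarrow> 'a::field" and A :: "nat \<Rightarrow> nat \<Rightarrow> 'a"
  assumes cls: "\<And>i. i < N \<Longrightarrow> cls i < K" and d: "\<And>c. c < K \<Longrightarrow> d c \<noteq> 0"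
  shows "det (diag_of_fun N (d \<circ> cls) + mat N N (\<lambda>(i, j). A (cls i) (cls j))) * (\<Prod>c<K. d c) =
    (\<Prod>c<K. d c ^ class_size N cls c) *
    det (diag_of_fun K d + mat K K (\<lambda>(r, t). A r t * of_nat (class_size N cls t)))"
proof -
  define X where "X = mat N K (\<lambda>(i, c). if cls i = c then 1 / d c else 0)"
  define Y where "Y = mat K N (\<lambda>(r, j). A r (cls j))"
  have X: "X \<in> carrier_mat N K" and Y: "Y \<in> carrier_mat K N"
    unfolding X_def Y_def by auto
  have "X * Y = mat N N (\<lambda>(i, j). 1 / d (cls i) * A (cls i) (cls j))"
    unfolding X_def Y_def by (rule class_indicator_mult_class_mat[OF cls])
  then have one_XY:
      "1\<^sub>m N + X * Y = mat N N (\<lambda>(i, j). (if i = j then 1 else 0) + A (cls i) (cls j) / d (cls i))"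
    by (intro eq_matI) auto
  have "diag_of_fun N (d \<circ> cls) + mat N N (\<lambda>(i, j). A (cls i) (cls j)) =
      diag_of_fun N (d \<circ> cls) * (1\<^sub>m N + X * Y)"
    unfolding one_XY diag_of_fun_mult_mat by (intro eq_matI) (auto simp: diag_of_fun_def distrib_left d cls)
  moreover have "det (diag_of_fun N (d \<circ> cls)) = (\<Prod>c<K. d c ^ class_size N cls c)"
    unfolding det_diag_of_fun comp_def by (rule prod_comp_eq_prod_class_size[OF cls])
  moreover have "1\<^sub>m N + X * Y \<in> carrier_mat N N"
    using X Y by auto
  ultimately have M: "det (diag_of_fun N (d \<circ> cls) + mat N N (\<lambda>(i, j). A (cls i) (cls j))) =
      (\<Prod>c<K. d c ^ class_size N cls c) * det (1\<^sub>m K + Y * X)"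
    using det_mult[OF diag_of_fun_carrier, where B = "1\<^sub>m N + X * Y"] det_one_plus_mult_commute[OF X Y] by simp
  have "Y * X = mat K K (\<lambda>(r, t). A r t * of_nat (class_size N cls t) * (1 / d t))"
    unfolding X_def Y_def by (rule class_mat_mult_class_indicator)
  then have one_YX: "1\<^sub>m K + Y * X =
      mat K K (\<lambda>(r, t). (if r = t then 1 else 0) + A r t * of_nat (class_size N cls t) / d t)"
    by (intro eq_matI) auto
  have "diag_of_fun K d + mat K K (\<lambda>(r, t). A r t * of_nat (class_size N cls t)) =
      (1\<^sub>m K + Y * X) * diag_of_fun K d"
    unfolding one_YX mat_mult_diag_of_fun by (intro eq_matI) (auto simp: diag_of_fun_def distrib_right d)
  moreover have "1\<^sub>m K + Y * X \<in> carrier_mat K K"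
    using X Y by auto
  ultimately have "det (diag_of_fun K d + mat K K (\<lambda>(r, t). A r t * of_nat (class_size N cls t))) =
      det (1\<^sub>m K + Y * X) * (\<Prod>c<K. d c)"
    using det_mult[OF _ diag_of_fun_carrier, where A = "1\<^sub>m K + Y * X"] by (simp add: det_diag_of_fun)
  then show ?thesis
    unfolding M by (simp add: ac_simps)
qed

(* The quotient matrix of the partition: for i in class r, entry (r, t) is the sum of the S_ij
   over the j \<noteq> i in class t. *)
definition quotient_mat ::
    "nat \<Rightarrow> nat \<Rightarrow> (nat \<Rightarrow> nat) \<Rightarrow> (nat \<Rightarrow> nat \<Rightarrow> 'a::comm_ring_1) \<Rightarrow> 'a mat" where
  "quotient_mat N K cls s =
     mat K K (\<lambda>(r, t). s r t * (of_nat (class_size N cls t) - (if r = t then 1 else 0)))"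

lemma poly_char_poly_class_constant:
  fixes S :: "'a::field mat" and s :: "nat \<Rightarrow> nat \<Rightarrow> 'a"
  assumes S: "S \<in> carrier_mat N N"
    and S_diag: "\<And>i. i < N \<Longrightarrow> S $$ (i, i) = 0"
    and S_off: "\<And>i j. i < N \<Longrightarrow> j < N \<Longrightarrow> i \<noteq> j \<Longrightarrow> S $$ (i, j) = s (cls i) (cls j)"
    and cls: "\<And>i. i < N \<Longrightarrow> cls i < K"
    and k: "\<And>c. c < K \<Longrightarrow> k + s c c \<noteq> 0"
  shows "poly (char_poly S) k * (\<Prod>c<K. k + s c c) =
    (\<Prod>c<K. (k + s c c) ^ class_size N cls c) * poly (char_poly (quotient_mat N K cls s)) k"
proof -
  define d where "d c = k + s c c" for c
  have "- char_matrix S k = diag_of_fun N (d \<circ> cls) + mat N N (\<lambda>(i, j). - s (cls i) (cls j))"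
    by (rule eq_matI) (use S S_diag S_off in \<open>auto simp: char_matrix_def diag_of_fun_def d_def\<close>)
  moreover have "- char_matrix (quotient_mat N K cls s) k =
      diag_of_fun K d + mat K K (\<lambda>(r, t). - s r t * of_nat (class_size N cls t))"
    by (rule eq_matI) (auto simp: char_matrix_def diag_of_fun_def quotient_mat_def d_def algebra_simps)
  moreover have "quotient_mat N K cls s \<in> carrier_mat K K"
    by (simp add: quotient_mat_def)
  ultimately show ?thesis
    using det_diag_plus_class_mat[of N cls K d "\<lambda>r t. - s r t"] cls k
    by (simp add: char_poly_matrix[OF S] char_poly_matrix[of _ K] d_def)
qed

lemma poly_eqI_cofinite:
  fixes p q :: "'a::{idom, ring_char_0} poly"
  assumes "finite F" and "\<And>x. x \<notin> F \<Longrightarrow> poly p x = poly q x"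
  shows "p = q"
proof (rule ccontr)
  assume "p \<noteq> q"
  then have "finite {x. poly (p - q) x = 0}"
    by (intro poly_roots_finite) simp
  moreover have "UNIV - F \<subseteq> {x. poly (p - q) x = 0}"
    using assms(2) by auto
  ultimately have "finite (UNIV - F)"
    by (rule finite_subset[rotated])
  then show False
    using assms(1) infinite_UNIV_char_0 by (metis Diff_infinite_finite)
qed

lemma det_mat_Suc_first_row:
  "det (mat (Suc n) (Suc n) f) =
    (\<Sum>j<Suc n. (-1) ^ j * f (0, j) * det (mat n n (\<lambda>(i, l). f (Suc i, if l < j then l else Suc l))))"
proof -
  have "det (mat (Suc n) (Suc n) f) =
      (\<Sum>j<Suc n. mat (Suc n) (Suc n) f $$ (0, j) * cofactor (mat (Suc n) (Suc n) f) 0 j)"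
    by (rule laplace_expansion_row) auto
  also have "\<dots> = (\<Sum>j<Suc n.
      (-1) ^ j * f (0, j) * det (mat n n (\<lambda>(i, l). f (Suc i, if l < j then l else Suc l))))"
  proof (rule sum.cong[OF refl])
    fix j assume j: "j \<in> {..<Suc n}"
    then have "mat_delete (mat (Suc n) (Suc n) f) 0 j = mat n n (\<lambda>(i, l). f (Suc i, if l < j then l else Suc l))"
      unfolding mat_delete_def by (intro eq_matI) auto
    then show "mat (Suc n) (Suc n) f $$ (0, j) * cofactor (mat (Suc n) (Suc n) f) 0 j =
        (-1) ^ j * f (0, j) * det (mat n n (\<lambda>(i, l). f (Suc i, if l < j then l else Suc l)))"
      unfolding cofactor_def using j by simp
  qed
  finally show ?thesis .
qed

lemma finite_complete_bip3_edges:
  "finite V1 \<Longrightarrow> finite V2 \<Longrightarrow> finite (complete_bip3_edges V1 V2)"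
  unfolding complete_bip3_edges_def by (rule finite_subset[of _ "Pow (V1 \<union> V2)"]) auto

lemma codegree_Diff_singleton:
  assumes "finite E"
  shows "real (codegree (E - {e}) i j) =
    real (codegree E i j) - (if e \<in> E \<and> i \<in> e \<and> j \<in> e then 1 else 0)"
proof -
  define F where "F = {f \<in> E. i \<in> f \<and> j \<in> f}"
  have "finite F"
    unfolding F_def using assms by simp
  then have "card F = Suc (card (F - {e}))" if "e \<in> F"
    using that by (rule card.remove)
  moreover have "{f \<in> E - {e}. i \<in> f \<and> j \<in> f} = F - {e}"
    and "e \<in> F \<longleftrightarrow> e \<in> E \<and> i \<in> e \<and> j \<in> e"
    unfolding F_def by auto
  ultimately show ?thesis
    unfolding codegree_def F_def[symmetric] by (cases "e \<in> F") simp_all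
qed

lemma codegree_complete_bip3_edges:
  assumes fin: "finite V1" "finite V2" and disj: "V1 \<inter> V2 = {}"
    and i: "i \<in> V1 \<union> V2" and j: "j \<in> V1 \<union> V2" and ij: "i \<noteq> j"
  shows "codegree (complete_bip3_edges V1 V2) i j =
    (if i \<in> V1 \<and> j \<in> V1 then card V2 else if i \<in> V2 \<and> j \<in> V2 then card V1
     else card V1 + card V2 - 2)"
proof -
  define T where
    "T = {v \<in> V1 \<union> V2. v \<noteq> i \<and> v \<noteq> j \<and> {i, j, v} \<inter> V1 \<noteq> {} \<and> {i, j, v} \<inter> V2 \<noteq> {}}"
  have edges: "{f \<in> complete_bip3_edges V1 V2. i \<in> f \<and> j \<in> f} = (\<lambda>v. {i, j, v}) ` T"
  proof (intro equalityI subsetI)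
    fix f assume "f \<in> {f \<in> complete_bip3_edges V1 V2. i \<in> f \<and> j \<in> f}"
    then have f: "f \<subseteq> V1 \<union> V2" "card f = 3" "f \<inter> V1 \<noteq> {}" "f \<inter> V2 \<noteq> {}" "i \<in> f" "j \<in> f"
      by (auto simp: complete_bip3_edges_def)
    then have "card (f - {i, j}) = 1"
      using ij by (simp add: card_Diff_subset card_ge_0_finite)
    then obtain v where "f - {i, j} = {v}"
      by (auto simp: card_Suc_eq)
    then have "f = {i, j, v}" "v \<noteq> i" "v \<noteq> j"
      using f by auto
    then show "f \<in> (\<lambda>v. {i, j, v}) ` T"
      using f unfolding T_def by auto
  next
    fix f assume "f \<in> (\<lambda>v. {i, j, v}) ` T"
    then obtain v where "v \<in> T" and f: "f = {i, j, v}"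
      by blast
    then have "v \<in> V1 \<union> V2" "v \<noteq> i" "v \<noteq> j" "f \<inter> V1 \<noteq> {}" "f \<inter> V2 \<noteq> {}"
      unfolding T_def by auto
    then show "f \<in> {f \<in> complete_bip3_edges V1 V2. i \<in> f \<and> j \<in> f}"
      using i j ij unfolding f complete_bip3_edges_def by simp
  qed
  have "inj_on (\<lambda>v. {i, j, v}) T"
  proof (rule inj_onI)
    fix v w assume "v \<in> T" "{i, j, v} = {i, j, w}"
    then have "v \<in> {i, j, w}" "v \<noteq> i" "v \<noteq> j"
      unfolding T_def by auto
    then show "v = w"
      by simp
  qed
  then have "codegree (complete_bip3_edges V1 V2) i j = card T"
    unfolding codegree_def edges by (rule card_image)
  also have "\<dots> = (if i \<in> V1 \<and> j \<in> V1 then card V2 else if i \<in> V2 \<and> j \<in> V2 then card V1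
     else card V1 + card V2 - 2)"
  proof -
    consider "i \<in> V1" "j \<in> V1" | "i \<in> V2" "j \<in> V2"
      | "\<not> (i \<in> V1 \<and> j \<in> V1)" "\<not> (i \<in> V2 \<and> j \<in> V2)"
      by blast
    then show ?thesis
    proof cases
      case 1
      then have "T = V2" unfolding T_def using disj by blast
      then show ?thesis using 1 by simp
    next
      case 2
      then have "T = V1" unfolding T_def using disj by blast
      then show ?thesis using 2 disj by auto
    next
      case 3
      then have "T = (V1 \<union> V2) - {i, j}" unfolding T_def using i j disj by blast
      then have "card T = card V1 + card V2 - 2"
        using i j ij fin disj by (simp add: card_Diff_subset card_Un_disjoint)
      then show ?thesis
        by (simp only: if_not_P[OF 3(1)] if_not_P[OF 3(2)])
    qed
  qed
  finally show ?thesis .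
qed

definition edge_class :: "nat set \<Rightarrow> nat set \<Rightarrow> nat \<Rightarrow> nat" where
  "edge_class V1 e i = (if i \<in> e then if i \<in> V1 then 1 else 0 else if i \<in> V1 then 2 else 3)"

(* The entry 1 - 2 c_ij of the Seidel matrix of C_{m,n} - e between distinct vertices of classes
   r and t. The entry (1, 1) never occurs, class 1 being the singleton e \<inter> V1; it is chosen
   equal to the entry (2, 2). *)
definition seidel_block :: "real \<Rightarrow> real \<Rightarrow> nat \<Rightarrow> nat \<Rightarrow> real" where
  "seidel_block m n r t =
     [[3 - 2*m, 7 - 2*m - 2*n, 5 - 2*m - 2*n, 1 - 2*m],
      [7 - 2*m - 2*n, 1 - 2*n, 1 - 2*n, 5 - 2*m - 2*n],
      [5 - 2*m - 2*n, 1 - 2*n, 1 - 2*n, 5 - 2*m - 2*n],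
      [1 - 2*m, 5 - 2*m - 2*n, 5 - 2*m - 2*n, 1 - 2*m]] ! r ! t"

lemma seidel_matrix_complete_bip3_minus_edge:
  assumes disj: "V1 \<inter> V2 = {}" and V: "V1 \<union> V2 = {0..<N}"
    and e: "e \<in> complete_bip3_edges V1 V2" and e1: "card (e \<inter> V1) = 1"
    and ij: "i < N" "j < N" "i \<noteq> j"
  shows "seidel_matrix N (complete_bip3_edges V1 V2 - {e}) $$ (i, j) =
    seidel_block (card V1) (card V2) (edge_class V1 e i) (edge_class V1 e j)"
proof -
  have fin: "finite V1" "finite V2"
    using V by (metis finite_Un finite_atLeastLessThan)+
  have "e \<subseteq> V1 \<union> V2" "card e = 3"
    using e by (simp_all add: complete_bip3_edges_def)
  then have "3 \<le> card (V1 \<union> V2)"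
    using fin card_mono[of "V1 \<union> V2" e] by simp
  then have "real (card V1 + card V2 - 2) = real (card V1) + real (card V2) - 2"
    using fin disj by (simp add: card_Un_disjoint of_nat_diff)
  then have full: "real (codegree (complete_bip3_edges V1 V2) i j) =
      (if i \<in> V1 \<and> j \<in> V1 then real (card V2) else if i \<in> V2 \<and> j \<in> V2 then real (card V1)
       else real (card V1) + real (card V2) - 2)"
    using codegree_complete_bip3_edges[OF fin disj, of i j] ij V by simp
  then have entry: "seidel_matrix N (complete_bip3_edges V1 V2 - {e}) $$ (i, j) =
      (if i \<in> V1 \<and> j \<in> V1 then 1 - 2 * real (card V2)
       else if i \<in> V2 \<and> j \<in> V2 then 1 - 2 * real (card V1)
       else 5 - 2 * real (card V1) - 2 * real (card V2)) + (if i \<in> e \<and> j \<in> e then 2 else 0)"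
    using codegree_Diff_singleton[OF finite_complete_bip3_edges[OF fin], of e i j] e ij
    unfolding seidel_matrix_def by simp
  have V2_iff: "x \<in> V2 \<longleftrightarrow> x \<notin> V1" if "x < N" for x
    using that V disj by auto
  have "\<not> (i \<in> e \<and> j \<in> e \<and> i \<in> V1 \<and> j \<in> V1)"
    using e1 ij(3) by (metis IntI card_1_singletonE singletonD)
  then show ?thesis
    unfolding entry seidel_block_def edge_class_def V2_iff[OF ij(1)] V2_iff[OF ij(2)]
    by (cases "i \<in> e"; cases "i \<in> V1"; cases "j \<in> e"; cases "j \<in> V1") simp_all
qed

lemma class_size_edge_class:
  assumes disj: "V1 \<inter> V2 = {}" and V: "V1 \<union> V2 = {0..<N}" and e: "e \<subseteq> V1 \<union> V2"
  shows "class_size N (edge_class V1 e) 0 = card (e \<inter> V2)"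
    and "class_size N (edge_class V1 e) 1 = card (e \<inter> V1)"
    and "class_size N (edge_class V1 e) 2 = card (V1 - e)"
    and "class_size N (edge_class V1 e) 3 = card (V2 - e)"
proof -
  have N: "i < N \<longleftrightarrow> i \<in> V1 \<or> i \<in> V2" for i
  proof -
    have "i \<in> V1 \<union> V2 \<longleftrightarrow> i \<in> {0..<N}"
      by (simp only: V)
    then show ?thesis
      by simp
  qed
  have cls: "edge_class V1 e i = 0 \<longleftrightarrow> i \<in> e \<and> i \<notin> V1"
    "edge_class V1 e i = 1 \<longleftrightarrow> i \<in> e \<and> i \<in> V1"
    "edge_class V1 e i = 2 \<longleftrightarrow> i \<notin> e \<and> i \<in> V1"
    "edge_class V1 e i = 3 \<longleftrightarrow> i \<notin> e \<and> i \<notin> V1" for i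
    by (simp_all add: edge_class_def)
  show "class_size N (edge_class V1 e) 0 = card (e \<inter> V2)"
    "class_size N (edge_class V1 e) 1 = card (e \<inter> V1)"
    "class_size N (edge_class V1 e) 2 = card (V1 - e)"
    "class_size N (edge_class V1 e) 3 = card (V2 - e)"
    unfolding class_size_def cls N using disj e by (intro arg_cong[where f = card]; blast)+
qed

definition bip3_minus_edge_quotient_mat :: "real \<Rightarrow> real \<Rightarrow> real mat" where
  "bip3_minus_edge_quotient_mat m n =
     mat 4 4 (\<lambda>(r, t). seidel_block m n r t * ([2, 1, m - 1, n - 2] ! t - (if r = t then 1 else 0)))"

lemma poly_char_poly_bip3_minus_edge_quotient_mat:
  fixes m n k :: real
  shows "(k - (2 * m - 3)) * poly (char_poly (bip3_minus_edge_quotient_mat m n)) k = - poly (xi1 m n) k"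
proof -
  define B where "B = bip3_minus_edge_quotient_mat m n"
  have B: "B \<in> carrier_mat 4 4"
    by (simp add: B_def bip3_minus_edge_quotient_mat_def)
  have "poly (char_poly B) k = det (mat 4 4 (\<lambda>(r, t). (if r = t then k else 0) - B $$ (r, t)))"
    unfolding char_poly_matrix[OF B]
    by (rule arg_cong[where f = det], rule eq_matI) (use B in \<open>auto simp: char_matrix_def\<close>)
  moreover have "(k - (2 * m - 3)) * det (mat 4 4 (\<lambda>(r, t). (if r = t then k else 0) - B $$ (r, t))) =
      - poly (xi1 m n) k"
  proof -
    have power5: "x ^ 5 = x * x * x * x * x" for x :: real
      by (simp add: eval_nat_numeral)
    show ?thesis
      unfolding B_def bip3_minus_edge_quotient_mat_def
      by (simp add: numeral_eq_Suc det_mat_Suc_first_row lessThan_Suc seidel_block_def)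
        (simp add: xi1_def algebra_simps power2_eq_square power3_eq_cube power4_eq_xxxx power5)
  qed
  ultimately show ?thesis
    unfolding B_def by simp
qed

lemma poly_char_poly_seidel_complete_bip3_minus_edge_reduction:
  assumes disj: "V1 \<inter> V2 = {}" and V: "V1 \<union> V2 = {0..<m + n}"
    and V1: "card V1 = m" and V2: "card V2 = n"
    and e: "e \<in> complete_bip3_edges V1 V2" and e1: "card (e \<inter> V1) = 1" and e2: "card (e \<inter> V2) = 2"
    and k: "k \<notin> {2 * real n - 1, 2 * real m - 1, 2 * real m - 3}"
  defines "p \<equiv> k - (2 * real n - 1)" and "q \<equiv> k - (2 * real m - 1)" and "r \<equiv> k - (2 * real m - 3)"
  shows "poly (char_poly (seidel_matrix (m + n) (complete_bip3_edges V1 V2 - {e}))) k * (r * p * p * q) =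
    r * r * p * p ^ (m - 1) * q ^ (n - 2) * poly (char_poly (bip3_minus_edge_quotient_mat (real m) (real n))) k"
proof -
  define cls where "cls = edge_class V1 e"
  define s where "s = seidel_block (real m) (real n)"
  have four: "c < 4 \<Longrightarrow> c = 0 \<or> c = 1 \<or> c = 2 \<or> c = 3" for c :: nat
    by auto
  have diag: "k + s 0 0 = r" "k + s 1 1 = p" "k + s 2 2 = p" "k + s 3 3 = q"
    by (simp_all add: s_def seidel_block_def p_def q_def r_def)
  have fin: "finite V1" "finite V2"
    using V by (metis finite_Un finite_atLeastLessThan)+
  have e_sub: "e \<subseteq> V1 \<union> V2"
    using e by (simp add: complete_bip3_edges_def)
  have mn: "1 \<le> m" "2 \<le> n"
    using card_mono[OF fin(1), of "e \<inter> V1"] card_mono[OF fin(2), of "e \<inter> V2"] e1 e2 V1 V2 by auto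
  have "card (V1 - e) = m - 1" "card (V2 - e) = n - 2"
    using fin e1 e2 V1 V2 by (simp_all add: card_Diff_subset_Int Int_commute)
  then have sizes: "class_size (m + n) cls 0 = 2" "class_size (m + n) cls 1 = 1"
    "class_size (m + n) cls 2 = m - 1" "class_size (m + n) cls 3 = n - 2"
    using class_size_edge_class[OF disj V e_sub] e1 e2 unfolding cls_def by simp_all
  have real_sizes: "real (class_size (m + n) cls c) = [2, 1, real m - 1, real n - 2] ! c" if "c < 4" for c
    using four[OF that] sizes mn by (auto simp: of_nat_diff)
  have "poly (char_poly (seidel_matrix (m + n) (complete_bip3_edges V1 V2 - {e}))) k * (\<Prod>c<4. k + s c c) =
      (\<Prod>c<4. (k + s c c) ^ class_size (m + n) cls c) * poly (char_poly (quotient_mat (m + n) 4 cls s)) k"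
  proof (rule poly_char_poly_class_constant)
    show "seidel_matrix (m + n) (complete_bip3_edges V1 V2 - {e}) $$ (i, j) = s (cls i) (cls j)"
      if "i < m + n" "j < m + n" "i \<noteq> j" for i j
      unfolding s_def cls_def using seidel_matrix_complete_bip3_minus_edge[OF disj V e e1 that] V1 V2 by simp
    show "k + s c c \<noteq> 0" if "c < 4" for c
      using four[OF that] diag k by (auto simp: p_def q_def r_def)
  qed (auto simp: seidel_matrix_def cls_def edge_class_def)
  moreover have "quotient_mat (m + n) 4 cls s = bip3_minus_edge_quotient_mat (real m) (real n)"
    unfolding quotient_mat_def bip3_minus_edge_quotient_mat_def s_def by (intro eq_matI) (auto simp: real_sizes)
  moreover have "{..<4::nat} = {0, 1, 2, 3}"
    by auto
  ultimately show ?thesis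
    by (simp add: diag[simplified] sizes[simplified] mult_ac power2_eq_square)
qed

lemma poly_char_poly_seidel_complete_bip3_minus_edge:
  assumes m: "m \<ge> 2" and n: "n \<ge> 3"
    and disj: "V1 \<inter> V2 = {}" and V: "V1 \<union> V2 = {0..<m + n}"
    and V1: "card V1 = m" and V2: "card V2 = n"
    and e: "e \<in> complete_bip3_edges V1 V2" and e1: "card (e \<inter> V1) = 1" and e2: "card (e \<inter> V2) = 2"
    and k: "k \<notin> {2 * real n - 1, 2 * real m - 1, 2 * real m - 3}"
  shows "poly (char_poly (seidel_matrix (m + n) (complete_bip3_edges V1 V2 - {e}))) k =
    (k - (2 * real n - 1)) ^ (m - 2) * (k - (2 * real m - 1)) ^ (n - 3) * - poly (xi1 (real m) (real n)) k"
proof -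
  define S where "S = seidel_matrix (m + n) (complete_bip3_edges V1 V2 - {e})"
  define Q where "Q = bip3_minus_edge_quotient_mat (real m) (real n)"
  define p where "p = k - (2 * real n - 1)"
  define q where "q = k - (2 * real m - 1)"
  define r where "r = k - (2 * real m - 3)"
  have "poly (char_poly S) k * (r * p * p * q) = r * r * p * p ^ (m - 1) * q ^ (n - 2) * poly (char_poly Q) k"
    unfolding S_def Q_def p_def q_def r_def
    by (rule poly_char_poly_seidel_complete_bip3_minus_edge_reduction[OF disj V V1 V2 e e1 e2 k])
  also have "\<dots> = p ^ (m - 2) * q ^ (n - 3) * (r * poly (char_poly Q) k) * (r * p * p * q)"
  proof -
    have "p ^ (m - 1) = p ^ (m - 2) * p" "q ^ (n - 2) = q ^ (n - 3) * q"
      using m n by (simp_all add: power_Suc2[symmetric] Suc_diff_Suc numeral_eq_Suc)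
    then show ?thesis
      by (simp only: mult_ac)
  qed
  also have "r * poly (char_poly Q) k = - poly (xi1 (real m) (real n)) k"
    unfolding Q_def r_def by (rule poly_char_poly_bip3_minus_edge_quotient_mat)
  finally have "poly (char_poly S) k * (r * p * p * q) =
      p ^ (m - 2) * q ^ (n - 3) * - poly (xi1 (real m) (real n)) k * (r * p * p * q)" .
  moreover have "r * p * p * q \<noteq> 0"
    using k by (simp add: p_def q_def r_def)
  ultimately have "poly (char_poly S) k = p ^ (m - 2) * q ^ (n - 3) * - poly (xi1 (real m) (real n)) k"
    by (metis mult_right_cancel)
  then show ?thesis
    by (simp only: S_def p_def q_def)
qed

theorem theorem2p6:
  fixes m n :: nat and V1 V2 :: "nat set" and e :: "nat set"
  assumes "m \<ge> 2" and "n \<ge> 3"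
    and "V1 \<inter> V2 = {}" and "V1 \<union> V2 = {0..<m+n}"
    and "card V1 = m" and "card V2 = n"
    and "e \<in> complete_bip3_edges V1 V2"
    and "card (e \<inter> V1) = 1" and "card (e \<inter> V2) = 2"
  shows "char_poly (seidel_matrix (m + n) (complete_bip3_edges V1 V2 - {e})) =
           [:-(2 * real n - 1), 1:] ^ (m - 2) * [:-(2 * real m - 1), 1:] ^ (n - 3)
           * (- xi1 (real m) (real n))"
proof (rule poly_eqI_cofinite)
  show "finite {2 * real n - 1, 2 * real m - 1, 2 * real m - 3}"
    by simp
  fix k assume "k \<notin> {2 * real n - 1, 2 * real m - 1, 2 * real m - 3}"
  then show "poly (char_poly (seidel_matrix (m + n) (complete_bip3_edges V1 V2 - {e}))) k =
      poly ([:-(2 * real n - 1), 1:] ^ (m - 2) * [:-(2 * real m - 1), 1:] ^ (n - 3) * (- xi1 (real m) (real n))) k"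
    using poly_char_poly_seidel_complete_bip3_minus_edge[OF assms] by (simp add: poly_power algebra_simps)
qed

end
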